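(* Let $(M_t)$ be the boundary Markov chain started from any fixed initial state, with steps $X_t=M_{t+1}-M_t$, and define $V_T(\gamma)=\sum_{t<T}|X_t|^\gamma$. For every $\gamma>3/2$ and every $\varepsilon>0$, almost surely \[ \limsup_{T\to\infty} \frac{V_T(\gamma)}{T^{2\gamma/3}\log^{2\gamma/3+\varepsilon} T} < \infty . \]
   Context: The boundary Markov chain is the Markov chain $(M_n)_{n\ge0}$ on $\{0,1,2,\dots\}$ with $M_{n+1}=M_n+X_n$. Given $M_n=m$, its step $X_n$ has the law \[ \mathbb P(X_n=1\mid M_n=m)=\frac{2m+3}{3m+3}. \] For $1\le k\le m$, \[ \mathbb P(X_n=-k\mid M_n=m)=\frac{2(2k-2)!}{(k-1)!(k+1)!}\cdot\frac{m!^2(2m-2k+1)!}{(m-k)!^2(2m+1)!}. \] *)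

theory Defs
  imports "HOL-Probability.Probability"
begin

definition bmc_kernel :: "nat \<Rightarrow> nat \<Rightarrow> real" where
  "bmc_kernel m j =
    (if j = Suc m then (2 * real m + 3) / (3 * real m + 3)
     else if j < m then
       (let k = m - j in
         (2 * fact (2 * k - 2) / (fact (k - 1) * fact (k + 1))) *
         (fact m ^ 2 * fact (2 * m - 2 * k + 1) / (fact (m - k) ^ 2 * fact (2 * m + 1))))
     else 0)"

definition boundary_markov_chain ::
    "'a measure \<Rightarrow> (nat \<Rightarrow> 'a \<Rightarrow> nat) \<Rightarrow> nat \<Rightarrow> bool" where
  "boundary_markov_chain P Mc m0 \<longleftrightarrow>
     prob_space P \<and>
     (\<forall>n. Mc n \<in> measurable P (count_space UNIV)) \<and>
     measure P {\<omega> \<in> space P. Mc 0 \<omega> = m0} = 1 \<and>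
     (\<forall>n (h :: nat \<Rightarrow> nat) j.
        measure P {\<omega> \<in> space P. (\<forall>i\<le>n. Mc i \<omega> = h i) \<and> Mc (Suc n) \<omega> = j}
        = measure P {\<omega> \<in> space P. \<forall>i\<le>n. Mc i \<omega> = h i} * bmc_kernel (h n) j)"

definition bmc_V :: "(nat \<Rightarrow> 'a \<Rightarrow> nat) \<Rightarrow> real \<Rightarrow> nat \<Rightarrow> 'a \<Rightarrow> real" where
  "bmc_V Mc \<gamma> T \<omega> = (\<Sum>t<T. \<bar>real (Mc (Suc t) \<omega>) - real (Mc t \<omega>)\<bar> powr \<gamma>)"

end

theory Submission
  imports Defs
begin

text \<open>
  The probability of a down-jump of size k is a Catalan-type number times a ratio of
  factorials bounded by 4^(-k), hence at most k^(-5/2), uniformly in the current state.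
  So the steps have tails P(|X_t| >= x) = O(x^(-3/2)) and, for gamma > 3/2,
  E min(|X_t|^gamma / b, 1) = O(b^(-3/(2 gamma))).  With the increasing scale
  b_t ~ t^p log^q t, p = 2 gamma/3 and q = p + epsilon, these bounds form a convergent
  Bertrand series, so sum_t min(|X_t|^gamma / b_t, 1) is finite almost surely.  Then
  eventually |X_t|^gamma <= b_t, the series sum_t |X_t|^gamma / b_t converges, and
  monotonicity of b gives V_T(gamma) <= b_T * sum_t |X_t|^gamma / b_t = O(b_T).
\<close>

section \<open>The tail of the transition kernel\<close>

lemma central_binomial_Suc: "Suc j * (2 * Suc j choose Suc j) = 2 * (2 * j + 1) * (2 * j choose j)"
  by (metis Suc_times_binomial Suc_times_binomial_add add_Suc_right
      mult.commute mult.left_commute mult_2 plus_nat.simps(2) semiring_norm(174))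

lemma central_binomial_sq_le: "(2 * j choose j) ^ 2 * (2 * j + 1) \<le> 16 ^ j"
proof (induction j)
  case 0 then show ?case by simp
next
  case (Suc j)
  define c where "c = 2 * j choose j"
  define c' where "c' = 2 * Suc j choose Suc j"
  have "2 * Suc j + 1 = 2 * j + 3" by simp
  then have "(c' ^ 2 * (2 * Suc j + 1)) * Suc j ^ 2 = (Suc j * c') ^ 2 * (2 * j + 3)"
    by (simp only: power_mult_distrib mult_ac)
  also have "\<dots> = 4 * (2 * j + 1) * (2 * j + 3) * (c ^ 2 * (2 * j + 1))"
    unfolding c'_def c_def central_binomial_Suc by algebra
  also have "\<dots> \<le> 4 * (2 * j + 1) * (2 * j + 3) * 16 ^ j"
    using Suc.IH by (simp add: c_def)
  also have "\<dots> \<le> 16 ^ Suc j * Suc j ^ 2"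
    by (simp add: power2_eq_square algebra_simps)
  finally show ?case by (simp add: c'_def)
qed

lemma fact_ratio_quarter_power_le:
  "4 ^ d * fact (n + d) ^ 2 * fact (2 * n + 1) \<le> (fact n ^ 2 * fact (2 * (n + d) + 1) :: nat)"
proof (induction d)
  case 0 then show ?case by simp
next
  case (Suc d)
  define x where "x = n + d"
  have fact1: "fact (n + Suc d) = Suc x * fact x"
    unfolding x_def by (simp only: add_Suc_right fact_Suc of_nat_id)
  have fact2: "fact (2 * (n + Suc d) + 1) = (2 * x + 3) * (2 * x + 2) * fact (2 * x + 1)"
  proof -
    have "2 * (n + Suc d) + 1 = Suc (Suc (2 * x + 1))" by (simp add: x_def)
    then show ?thesis by (simp only: fact_Suc) (simp add: algebra_simps)
  qed
  have "4 ^ Suc d * fact (n + Suc d) ^ 2 * fact (2 * n + 1)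
      = (4 * Suc x ^ 2) * (4 ^ d * fact x ^ 2 * fact (2 * n + 1))"
    by (simp only: fact1 power_mult_distrib power_Suc mult_ac)
  also have "\<dots> \<le> ((2 * x + 3) * (2 * x + 2)) * (fact n ^ 2 * fact (2 * x + 1))"
    by (rule mult_le_mono[OF _ Suc.IH[folded x_def]]) (simp add: power2_eq_square algebra_simps)
  also have "\<dots> = fact n ^ 2 * fact (2 * (n + Suc d) + 1)"
    by (simp only: fact2 mult_ac)
  finally show ?case .
qed

lemma bmc_kernel_down_le_central_binomial:
  "bmc_kernel (n + Suc j) n \<le> real (2 * j choose j) / (2 * (j + 1) * (j + 2) * 4 ^ j)"
proof -
  define k where "k = Suc j"
  define c where "c = real (2 * j choose j)"
  define q :: real where "q = fact (n + k) ^ 2 * fact (2 * n + 1) / (fact n ^ 2 * fact (2 * (n + k) + 1))"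
  have "bmc_kernel (n + k) n = 2 * fact (2 * j) / (fact j * fact (j + 2)) * q"
    by (simp add: bmc_kernel_def Let_def q_def k_def)
  also have "2 * fact (2 * j) / (fact j * fact (j + 2)) = 2 * c / ((j + 1) * (j + 2))"
    by (simp add: c_def binomial_fact power2_eq_square field_simps)
  finally have kernel: "bmc_kernel (n + k) n = 2 * c / ((j + 1) * (j + 2)) * q" .
  have "q * 4 ^ k = 4 ^ k * fact (n + k) ^ 2 * fact (2 * n + 1) / (fact n ^ 2 * fact (2 * (n + k) + 1))"
    by (simp add: q_def)
  also have "\<dots> \<le> 1"
    using of_nat_mono[OF fact_ratio_quarter_power_le[of k n], where 'a=real] by (simp del: fact_Suc)
  finally have "q \<le> 1 / 4 ^ k"
    by (simp add: pos_le_divide_eq)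
  then have "bmc_kernel (n + k) n \<le> 2 * c / ((j + 1) * (j + 2)) * (1 / 4 ^ k)"
    unfolding kernel by (rule mult_left_mono) (simp add: c_def)
  also have "\<dots> = c / (2 * (j + 1) * (j + 2) * 4 ^ j)"
    by (simp add: k_def field_simps)
  finally show ?thesis
    by (simp add: k_def c_def)
qed

lemma central_binomial_div_le:
  "real (2 * j choose j) / (2 * (j + 1) * (j + 2) * 4 ^ j) \<le> real (Suc j) powr (-5/2)"
proof (rule power2_le_imp_le)
  define c where "c = real (2 * j choose j)"
  define k where "k = Suc j"
  have "(2 * j choose j) ^ 2 * k ^ 5 \<le> (2 * j choose j) ^ 2 * ((2 * j + 1) * (4 * (j + 1) ^ 2 * (j + 2) ^ 2))"
  proof (intro mult_le_mono2)
    have "k ^ 5 = k * (1 * k ^ 2 * k ^ 2)" by (simp add: eval_nat_numeral)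
    also have "\<dots> \<le> (2 * j + 1) * (4 * (j + 1) ^ 2 * (j + 2) ^ 2)"
      unfolding k_def by (intro mult_le_mono power_mono) auto
    finally show "k ^ 5 \<le> (2 * j + 1) * (4 * (j + 1) ^ 2 * (j + 2) ^ 2)" .
  qed
  also have "\<dots> \<le> 16 ^ j * (4 * (j + 1) ^ 2 * (j + 2) ^ 2)"
    using central_binomial_sq_le[of j] by (simp only: mult.assoc[symmetric] mult_le_mono1)
  also have "\<dots> = (2 * (j + 1) * (j + 2) * 4 ^ j) ^ 2"
  proof -
    have "((4::nat) ^ j) ^ 2 = 16 ^ j" "(2::nat) ^ 2 = 4"
      by (simp_all add: power_mult[symmetric] mult.commute[of j] power_mult)
    then show ?thesis by (simp only: power_mult_distrib ac_simps)
  qed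
  finally have "c ^ 2 * real k ^ 5 \<le> real (2 * (j + 1) * (j + 2) * 4 ^ j) ^ 2"
    unfolding c_def of_nat_power[symmetric] of_nat_mult[symmetric] of_nat_le_iff .
  then have "(c / (2 * (j + 1) * (j + 2) * 4 ^ j)) ^ 2 \<le> 1 / real k ^ 5"
    by (simp add: k_def power_divide divide_le_eq le_divide_eq mult.commute)
  also have "1 / real k ^ 5 = real k powr (- 5)"
    by (simp add: k_def powr_minus divide_inverse)
  also have "\<dots> = (real k powr (-5/2)) ^ 2"
    by (simp add: k_def powr_power)
  finally show "(real (2 * j choose j) / (2 * (j + 1) * (j + 2) * 4 ^ j)) ^ 2 \<le> (real (Suc j) powr (-5/2)) ^ 2"
    by (simp add: c_def k_def)
qed simp

lemma bmc_kernel_down_le: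
  assumes "1 \<le> k" "k \<le> m"
  shows "bmc_kernel m (m - k) \<le> real k powr (-5/2)"
proof -
  obtain j where k: "k = Suc j" using assms(1) by (cases k) auto
  obtain n where m: "m = n + k" using assms(2) by (metis add.commute le_add_diff_inverse)
  show ?thesis
    using bmc_kernel_down_le_central_binomial[of n j] central_binomial_div_le[of j]
    unfolding m k by simp
qed

lemma bmc_kernel_nonneg: "0 \<le> bmc_kernel m j"
  unfolding bmc_kernel_def Let_def by (auto intro!: mult_nonneg_nonneg divide_nonneg_nonneg)

lemma bmc_kernel_eq_0: "m \<le> j \<Longrightarrow> j \<noteq> Suc m \<Longrightarrow> bmc_kernel m j = 0"
  unfolding bmc_kernel_def by simp

lemma bmc_kernel_Suc_le_1: "bmc_kernel m (Suc m) \<le> 1"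
  unfolding bmc_kernel_def by simp

section \<open>Sums of powers\<close>

lemma powr_diff_mvt:
  fixes x y r :: real
  assumes "0 < x" "x < y"
  obtains z where "x < z" "z < y" "y powr r - x powr r = (y - x) * (r * z powr (r - 1))"
proof -
  have "((\<lambda>t. t powr r) has_real_derivative r * t powr (r - 1)) (at t)" if "x \<le> t" for t
    using assms that by (intro has_real_derivative_powr) auto
  then have "\<exists>z>x. z < y \<and> y powr r - x powr r = (y - x) * (r * z powr (r - 1))"
    using MVT2[OF assms(2), of "\<lambda>t. t powr r" "\<lambda>t. r * t powr (r - 1)"] by simp
  then show ?thesis using that by blast
qed

lemma powr_diff_div_ge_left:
  fixes x y r :: real
  assumes "1 \<le> r" "0 < x" "x \<le> y"
  shows "x powr (r - 1) * (y - x) \<le> (y powr r - x powr r) / r"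
proof (cases "x = y")
  case False
  with assms(3) have "x < y" by simp
  then obtain z where z: "x < z" "z < y" "y powr r - x powr r = (y - x) * (r * z powr (r - 1))"
    by (rule powr_diff_mvt[OF assms(2)])
  have "x powr (r - 1) \<le> z powr (r - 1)"
    using assms z by (intro powr_mono2) auto
  moreover have "(y powr r - x powr r) / r = z powr (r - 1) * (y - x)"
    using z(3) assms(1) by simp
  ultimately show ?thesis
    using assms(3) by (simp add: mult_right_mono)
qed simp

lemma powr_diff_div_ge_right:
  fixes x y r :: real
  assumes "r \<le> 1" "r \<noteq> 0" "0 < x" "x \<le> y"
  shows "y powr (r - 1) * (y - x) \<le> (y powr r - x powr r) / r"
proof (cases "x = y")
  case False
  with assms(4) have "x < y" by simp
  then obtain z where z: "x < z" "z < y" "y powr r - x powr r = (y - x) * (r * z powr (r - 1))"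
    by (rule powr_diff_mvt[OF assms(3)])
  have "y powr (r - 1) \<le> z powr (r - 1)"
    using assms z by (intro powr_mono2') auto
  moreover have "(y powr r - x powr r) / r = z powr (r - 1) * (y - x)"
    using z(3) assms(2) by simp
  ultimately show ?thesis
    using assms(4) by (simp add: mult_right_mono)
qed simp

lemma sum_le_telescope:
  fixes f F :: "nat \<Rightarrow> real"
  assumes "m \<le> n" "\<And>i. m \<le> i \<Longrightarrow> i < n \<Longrightarrow> f i \<le> F (Suc i) - F i"
  shows "(\<Sum>i=m..<n. f i) \<le> F n - F m"
proof -
  have "(\<Sum>i=m..<n. f i) \<le> (\<Sum>i=m..<n. F (Suc i) - F i)"
    using assms(2) by (intro sum_mono) auto
  also have "\<dots> = F n - F m"
    using assms(1) by (rule sum_Suc_diff')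
  finally show ?thesis .
qed

lemma sum_powr_le_of_nonneg:
  fixes q :: real
  assumes "0 \<le> q"
  shows "(\<Sum>k=1..n. real k powr q) \<le> (real n + 1) powr (q + 1) / (q + 1)"
proof -
  define F where "F i = real i powr (q + 1) / (q + 1)" for i
  have "(\<Sum>k=1..<Suc n. real k powr q) \<le> F (Suc n) - F 1"
  proof (rule sum_le_telescope)
    fix k :: nat assume "1 \<le> k"
    then show "real k powr q \<le> F (Suc k) - F k"
      using powr_diff_div_ge_left[of "q + 1" "real k" "real k + 1"] assms
      by (simp add: F_def diff_divide_distrib add.commute)
  qed simp
  also have "\<dots> \<le> F (Suc n)"
    using assms by (simp add: F_def)
  finally show ?thesis
    by (simp only: F_def atLeastLessThanSuc_atLeastAtMost of_nat_Suc add.commute[of 1 "real n"])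
qed

lemma sum_powr_le_of_neg:
  fixes q :: real
  assumes "-1 < q" "q < 0"
  shows "(\<Sum>k=1..n. real k powr q) \<le> real n powr (q + 1) / (q + 1)"
proof -
  define F where "F i = (real i - 1) powr (q + 1) / (q + 1)" for i
  have "(\<Sum>k=1..<Suc n. real k powr q) \<le> F (Suc n) - F 1"
  proof (rule sum_le_telescope)
    fix k :: nat assume "1 \<le> k"
    show "real k powr q \<le> F (Suc k) - F k"
    proof (cases "k = 1")
      case True
      then have "F (Suc k) - F k = 1 / (q + 1)" by (simp add: F_def)
      moreover have "1 \<le> 1 / (q + 1)" using assms by (simp add: le_divide_eq)
      ultimately show ?thesis using True by simp
    next
      case False
      with \<open>1 \<le> k\<close> have "0 < real k - 1" by simp
      then have "real k powr q \<le> (real k powr (q + 1) - (real k - 1) powr (q + 1)) / (q + 1)"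
        using powr_diff_div_ge_right[of "q + 1" "real k - 1" "real k"] assms by simp
      also have "\<dots> = F (Suc k) - F k"
        by (simp add: F_def diff_divide_distrib)
      finally show ?thesis .
    qed
  qed simp
  then show ?thesis
    by (simp add: F_def atLeastLessThanSuc_atLeastAtMost)
qed

lemma sum_powr_le:
  fixes q :: real
  assumes "-1 < q"
  shows "(\<Sum>k=1..n. real k powr q) \<le> (real n + 1) powr (q + 1) / (q + 1)"
proof (cases "0 \<le> q")
  case False
  then have "(\<Sum>k=1..n. real k powr q) \<le> real n powr (q + 1) / (q + 1)"
    using assms by (intro sum_powr_le_of_neg) auto
  also have "\<dots> \<le> (real n + 1) powr (q + 1) / (q + 1)"
    using assms by (intro divide_right_mono powr_mono2) auto
  finally show ?thesis .
qed (rule sum_powr_le_of_nonneg)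

lemma sum_powr_tail_le:
  fixes p :: real
  assumes "p > 1" "1 \<le> N"
  shows "(\<Sum>k=Suc N..M. real k powr (- p)) \<le> real N powr (1 - p) / (p - 1)"
proof (cases "N \<le> M")
  case True
  define F where "F i = (real i - 1) powr (1 - p) / (1 - p)" for i
  have "(\<Sum>k=Suc N..<Suc M. real k powr (- p)) \<le> F (Suc M) - F (Suc N)"
  proof (rule sum_le_telescope)
    fix k :: nat assume "Suc N \<le> k"
    then show "real k powr (- p) \<le> F (Suc k) - F k"
      using powr_diff_div_ge_right[of "1 - p" "real k - 1" "real k"] assms
      by (simp add: F_def diff_divide_distrib)
  qed (use True in simp)
  also have "\<dots> = (real N powr (1 - p) - real M powr (1 - p)) / (p - 1)"
  proof -
    have "1 - p = - (p - 1)" by simp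
    then show ?thesis by (simp only: F_def divide_minus_right) (simp add: diff_divide_distrib)
  qed
  also have "\<dots> \<le> real N powr (1 - p) / (p - 1)"
    using assms by (simp add: divide_right_mono)
  finally show ?thesis
    by (simp only: atLeastLessThanSuc_atLeastAtMost)
qed (use assms in simp)

lemma sum_powr_head_le:
  fixes a g s :: real
  assumes a: "0 < a" "a < g" and s: "1 \<le> s" "real N \<le> s"
  shows "(\<Sum>k=1..N. real k powr (- (a + 1)) * (real k powr g / s powr g))
         \<le> 2 powr (g - a) / (g - a) * s powr (- a)"
proof -
  have "(\<Sum>k=1..N. real k powr (- (a + 1)) * (real k powr g / s powr g))
      = (\<Sum>k=1..N. real k powr (g - a - 1)) / s powr g"
    unfolding sum_divide_distrib by (intro sum.cong) (auto simp: powr_add[symmetric] algebra_simps)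
  also have "\<dots> \<le> (real N + 1) powr (g - a) / (g - a) / s powr g"
    using sum_powr_le[of "g - a - 1" N] a by (intro divide_right_mono) auto
  also have "\<dots> \<le> (2 * s) powr (g - a) / (g - a) / s powr g"
    using a s by (intro divide_right_mono powr_mono2) auto
  also have "\<dots> = 2 powr (g - a) / (g - a) * s powr (- a)"
    using s by (simp add: powr_mult powr_diff powr_minus divide_inverse)
  finally show ?thesis .
qed

lemma sum_powr_truncated_le:
  fixes a g b :: real
  assumes a: "0 < a" "a < g" and b: "1 \<le> b"
  shows "(\<Sum>k=1..m. real k powr (- (a + 1)) * min (real k powr g / b) 1)
         \<le> (2 powr (g - a) / (g - a) + 2 powr a / a) * b powr (- a / g)"
proof -
  \<comment> \<open>Split at N = floor (b powr (1/g)): below N the minimum is k^g/b,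
    above N the tail of k^(-a-1) is small.\<close>
  define s where "s = b powr (1 / g)"
  have s1: "1 \<le> s" unfolding s_def using a b by (intro ge_one_powr_ge_zero) auto
  have s_g: "s powr g = b"
    unfolding s_def powr_powr using a b by simp
  have s_a: "s powr (- a) = b powr (- a / g)"
    unfolding s_def powr_powr by simp
  define N where "N = nat \<lfloor>s\<rfloor>"
  have "1 \<le> N" "real N \<le> s" "s \<le> real N + 1"
    unfolding N_def using s1 by linarith+
  then have N: "1 \<le> N" "real N \<le> s" "s \<le> 2 * real N"
    by linarith+
  define F where "F k = real k powr (- (a + 1)) * min (real k powr g / b) 1" for k :: nat
  have "(\<Sum>k=1..m. F k) \<le> (\<Sum>k\<in>{1..N} \<union> {Suc N..m}. F k)"
    using b by (intro sum_mono2) (auto simp: F_def)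
  also have "\<dots> = (\<Sum>k=1..N. F k) + (\<Sum>k=Suc N..m. F k)"
    by (rule sum.union_disjoint) auto
  finally have split: "(\<Sum>k=1..m. F k) \<le> (\<Sum>k=1..N. F k) + (\<Sum>k=Suc N..m. F k)" .
  have "(\<Sum>k=1..N. F k) \<le> (\<Sum>k=1..N. real k powr (- (a + 1)) * (real k powr g / s powr g))"
    unfolding F_def s_g by (intro sum_mono mult_left_mono) auto
  also have "\<dots> \<le> 2 powr (g - a) / (g - a) * s powr (- a)"
    using a s1 N(2) by (rule sum_powr_head_le)
  finally have low: "(\<Sum>k=1..N. F k) \<le> 2 powr (g - a) / (g - a) * s powr (- a)" .
  have "(\<Sum>k=Suc N..m. F k) \<le> (\<Sum>k=Suc N..m. real k powr (- (a + 1)))"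
    unfolding F_def using b by (intro sum_mono mult_right_le_one_le) auto
  also have "\<dots> \<le> real N powr (- a) / a"
    using sum_powr_tail_le[of "a + 1" N m] a N(1) by (simp add: algebra_simps)
  also have "\<dots> \<le> (s / 2) powr (- a) / a"
    using a N by (intro divide_right_mono powr_mono2') auto
  also have "\<dots> = 2 powr a / a * s powr (- a)"
    using s1 by (simp add: powr_divide powr_minus_divide)
  finally have high: "(\<Sum>k=Suc N..m. F k) \<le> 2 powr a / a * s powr (- a)" .
  have "(\<Sum>k=1..m. F k) \<le> (2 powr (g - a) / (g - a) + 2 powr a / a) * s powr (- a)"
    using split low high by (simp only: distrib_right)
  then show ?thesis
    unfolding F_def s_a .
qed

lemma bmc_kernel_down_truncated_moment_le:
  fixes g b :: real
  assumes g: "3/2 < g" and b: "1 \<le> b"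
  shows "(\<Sum>j<m. min (\<bar>real j - real m\<bar> powr g / b) 1 * bmc_kernel m j)
         \<le> (2 powr (g - 3/2) / (g - 3/2) + 2 powr (3/2) / (3/2)) * b powr (- 3 / (2 * g))"
proof -
  define f where "f j = min (\<bar>real j - real m\<bar> powr g / b) 1 * bmc_kernel m j" for j
  have "(\<Sum>j<m. f j) = (\<Sum>k=1..m. f (m - k))"
    by (rule sum.reindex_bij_witness[of _ "\<lambda>k. m - k" "\<lambda>j. m - j"]) auto
  also have "\<dots> \<le> (\<Sum>k=1..m. real k powr (- (3/2 + 1)) * min (real k powr g / b) 1)"
  proof (rule sum_mono)
    fix k assume k: "k \<in> {1..m}"
    then have "\<bar>real (m - k) - real m\<bar> = real k" by auto
    then have "f (m - k) = min (real k powr g / b) 1 * bmc_kernel m (m - k)"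
      unfolding f_def by simp
    also have "\<dots> \<le> min (real k powr g / b) 1 * real k powr (- 5 / 2)"
      using bmc_kernel_down_le[of k m] k b by (intro mult_left_mono) auto
    finally show "f (m - k) \<le> real k powr (- (3/2 + 1)) * min (real k powr g / b) 1"
      by (simp add: mult.commute)
  qed
  also have "\<dots> \<le> (2 powr (g - 3/2) / (g - 3/2) + 2 powr (3/2) / (3/2)) * b powr (- (3/2) / g)"
    using g b by (intro sum_powr_truncated_le) auto
  finally show ?thesis
    by (simp add: f_def)
qed

lemma bmc_kernel_truncated_moment_le:
  fixes g b :: real
  assumes g: "3/2 < g" and b: "1 \<le> b"
  shows "(\<Sum>j\<le>Suc m. min (\<bar>real j - real m\<bar> powr g / b) 1 * bmc_kernel m j)
         \<le> (2 powr (g - 3/2) / (g - 3/2) + 2 powr (3/2) / (3/2) + 1) * b powr (- 3 / (2 * g))"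
proof -
  define f where "f j = min (\<bar>real j - real m\<bar> powr g / b) 1 * bmc_kernel m j" for j
  have "{..Suc m} = insert (Suc m) (insert m {..<m})" by auto
  then have "(\<Sum>j\<le>Suc m. f j) = f (Suc m) + f m + (\<Sum>j<m. f j)"
    by (simp add: add.assoc)
  moreover have "f m = 0"
    unfolding f_def by (simp add: bmc_kernel_eq_0)
  moreover have "f (Suc m) \<le> b powr (- 3 / (2 * g))"
  proof -
    have "f (Suc m) \<le> 1 / b"
      unfolding f_def using bmc_kernel_Suc_le_1[of m] bmc_kernel_nonneg[of m "Suc m"] b
      by (simp add: divide_right_mono)
    also have "\<dots> = b powr (- 1)"
      using b by (simp add: powr_minus_divide)
    also have "\<dots> \<le> b powr (- 3 / (2 * g))"
      using b g by (intro powr_mono) (auto simp: field_simps)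
    finally show ?thesis .
  qed
  moreover have "(\<Sum>j<m. f j) \<le> (2 powr (g - 3/2) / (g - 3/2) + 2 powr (3/2) / (3/2)) * b powr (- 3 / (2 * g))"
    unfolding f_def using g b by (rule bmc_kernel_down_truncated_moment_le)
  ultimately show ?thesis
    unfolding f_def[symmetric] by (simp add: distrib_right)
qed

section \<open>One-step expectations of the chain\<close>

lemma nn_integral_split_by_value:
  fixes X :: "'a \<Rightarrow> 'b::countable"
  assumes X[measurable]: "X \<in> measurable M (count_space UNIV)" and f[measurable]: "f \<in> borel_measurable M"
  shows "(\<integral>\<^sup>+\<omega>. f \<omega> \<partial>M)
       = (\<integral>\<^sup>+x. (\<integral>\<^sup>+\<omega>. f \<omega> * indicator {\<omega> \<in> space M. X \<omega> = x} \<omega> \<partial>M) \<partial>count_space UNIV)"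
proof -
  have "(\<integral>\<^sup>+\<omega>. f \<omega> \<partial>M)
      = (\<integral>\<^sup>+\<omega>. (\<integral>\<^sup>+x. f \<omega> * indicator {X \<omega>} x \<partial>count_space UNIV) \<partial>M)"
    by (simp add: nn_integral_cmult_indicator)
  also have "\<dots> = (\<integral>\<^sup>+\<omega>. (\<integral>\<^sup>+x. f \<omega> * indicator {\<omega> \<in> space M. X \<omega> = x} \<omega> \<partial>count_space UNIV) \<partial>M)"
    by (intro nn_integral_cong) (auto simp: indicator_def)
  also have "\<dots> = (\<integral>\<^sup>+x. (\<integral>\<^sup>+\<omega>. f \<omega> * indicator {\<omega> \<in> space M. X \<omega> = x} \<omega> \<partial>M) \<partial>count_space UNIV)"
    by (rule nn_integral_count_space_nn_integral) auto
  finally show ?thesis .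
qed

lemma measurable_map_upt:
  fixes X :: "nat \<Rightarrow> 'a \<Rightarrow> 'b::countable"
  assumes [measurable]: "\<And>i. X i \<in> measurable M (count_space UNIV)"
  shows "(\<lambda>\<omega>. map (\<lambda>i. X i \<omega>) [0..<n]) \<in> measurable M (count_space UNIV)"
proof -
  have "{\<omega> \<in> space M. map (\<lambda>i. X i \<omega>) [0..<n] = l}
      = {\<omega> \<in> space M. length l = n \<and> (\<forall>i<n. X i \<omega> = l ! i)}" for l
    by (auto simp: list_eq_iff_nth_eq)
  moreover have "{\<omega> \<in> space M. length l = n \<and> (\<forall>i<n. X i \<omega> = l ! i)} \<in> sets M" for l
    by measurable
  ultimately show ?thesis
    by (auto simp: measurable_count_space_eq2_countable vimage_def Int_def conj_commute)
qed

lemma bmc_nn_integral_step_on_history_le: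
  fixes \<phi> :: "nat \<Rightarrow> nat \<Rightarrow> ennreal" and h :: "nat \<Rightarrow> nat" and t :: nat
  assumes bmc: "boundary_markov_chain P Mc m0"
    and bound: "\<And>m. (\<integral>\<^sup>+j. \<phi> m j * ennreal (bmc_kernel m j) \<partial>count_space UNIV) \<le> B"
  defines "S \<equiv> {\<omega> \<in> space P. \<forall>i\<le>t. Mc i \<omega> = h i}"
  shows "(\<integral>\<^sup>+\<omega>. \<phi> (Mc t \<omega>) (Mc (Suc t) \<omega>) * indicator S \<omega> \<partial>P) \<le> emeasure P S * B"
proof -
  have [measurable]: "Mc n \<in> measurable P (count_space UNIV)" for n
    using bmc unfolding boundary_markov_chain_def by blast
  interpret prob_space P
    using bmc unfolding boundary_markov_chain_def by blast
  define A where "A j = {\<omega> \<in> space P. (\<forall>i\<le>t. Mc i \<omega> = h i) \<and> Mc (Suc t) \<omega> = j}" for j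
  have [measurable]: "S \<in> sets P" "A j \<in> sets P" for j
    unfolding S_def A_def by measurable
  have A: "emeasure P (A j) = emeasure P S * ennreal (bmc_kernel (h t) j)" for j
    using bmc bmc_kernel_nonneg unfolding boundary_markov_chain_def A_def S_def
    by (simp add: emeasure_eq_measure ennreal_mult)
  have "(\<integral>\<^sup>+\<omega>. \<phi> (Mc t \<omega>) (Mc (Suc t) \<omega>) * indicator S \<omega> \<partial>P)
      = (\<integral>\<^sup>+j. (\<integral>\<^sup>+\<omega>. \<phi> (Mc t \<omega>) (Mc (Suc t) \<omega>) * indicator S \<omega>
                     * indicator {\<omega> \<in> space P. Mc (Suc t) \<omega> = j} \<omega> \<partial>P) \<partial>count_space UNIV)"
    by (rule nn_integral_split_by_value) measurable
  also have "\<dots> = (\<integral>\<^sup>+j. (\<integral>\<^sup>+\<omega>. \<phi> (h t) j * indicator (A j) \<omega> \<partial>P) \<partial>count_space UNIV)"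
    by (intro nn_integral_cong) (auto simp: S_def A_def indicator_def)
  also have "\<dots> = (\<integral>\<^sup>+j. \<phi> (h t) j * emeasure P (A j) \<partial>count_space UNIV)"
    by (intro nn_integral_cong) (simp add: nn_integral_cmult_indicator)
  also have "\<dots> = (\<integral>\<^sup>+j. emeasure P S * (\<phi> (h t) j * ennreal (bmc_kernel (h t) j)) \<partial>count_space UNIV)"
    by (simp add: A mult_ac)
  also have "\<dots> = emeasure P S * (\<integral>\<^sup>+j. \<phi> (h t) j * ennreal (bmc_kernel (h t) j) \<partial>count_space UNIV)"
    by (rule nn_integral_cmult) simp
  also have "\<dots> \<le> emeasure P S * B"
    by (intro mult_left_mono bound) simp
  finally show ?thesis .
qed

lemma bmc_nn_integral_step_le:
  fixes \<phi> :: "nat \<Rightarrow> nat \<Rightarrow> ennreal"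
  assumes bmc: "boundary_markov_chain P Mc m0"
    and bound: "\<And>m. (\<integral>\<^sup>+j. \<phi> m j * ennreal (bmc_kernel m j) \<partial>count_space UNIV) \<le> B"
  shows "(\<integral>\<^sup>+\<omega>. \<phi> (Mc t \<omega>) (Mc (Suc t) \<omega>) \<partial>P) \<le> B"
proof -
  have [measurable]: "Mc n \<in> measurable P (count_space UNIV)" for n
    using bmc unfolding boundary_markov_chain_def by blast
  interpret prob_space P
    using bmc unfolding boundary_markov_chain_def by blast
  \<comment> \<open>The Markov property is only stated for complete histories, so the expectation is
    split over the countably many histories M_0, ..., M_t.\<close>
  define H where "H \<omega> = map (\<lambda>i. Mc i \<omega>) [0..<Suc t]" for \<omega>
  define E where "E l = {\<omega> \<in> space P. H \<omega> = l}" for l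
  have [measurable]: "H \<in> measurable P (count_space UNIV)"
    unfolding H_def by (rule measurable_map_upt) simp
  have E: "E l = (if length l = Suc t then {\<omega> \<in> space P. \<forall>i\<le>t. Mc i \<omega> = l ! i} else {})" for l
    by (auto simp: E_def H_def list_eq_iff_nth_eq less_Suc_eq_le simp del: upt_Suc)
  have "(\<integral>\<^sup>+\<omega>. \<phi> (Mc t \<omega>) (Mc (Suc t) \<omega>) \<partial>P)
      = (\<integral>\<^sup>+l. (\<integral>\<^sup>+\<omega>. \<phi> (Mc t \<omega>) (Mc (Suc t) \<omega>) * indicator (E l) \<omega> \<partial>P) \<partial>count_space UNIV)"
    unfolding E_def by (rule nn_integral_split_by_value) measurable
  also have "\<dots> \<le> (\<integral>\<^sup>+l. emeasure P (E l) * B \<partial>count_space UNIV)"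
    using bmc_nn_integral_step_on_history_le[OF bmc bound, of t "\<lambda>i. _ ! i"]
    by (intro nn_integral_mono) (simp add: E)
  also have "\<dots> = (\<integral>\<^sup>+l. emeasure P (E l) \<partial>count_space UNIV) * B"
    by (rule nn_integral_multc) simp
  also have "(\<integral>\<^sup>+l. emeasure P (E l) \<partial>count_space UNIV) = (\<integral>\<^sup>+\<omega>. 1 \<partial>P)"
    unfolding E_def by (subst nn_integral_split_by_value[of H]) simp_all
  finally show ?thesis
    by (simp add: emeasure_space_1)
qed

lemma bmc_truncated_moment_le:
  fixes \<gamma> b :: real
  assumes bmc: "boundary_markov_chain P Mc m0" and \<gamma>: "3/2 < \<gamma>" and b: "1 \<le> b"
  shows "(\<integral>\<^sup>+\<omega>. ennreal (min (\<bar>real (Mc (Suc t) \<omega>) - real (Mc t \<omega>)\<bar> powr \<gamma> / b) 1) \<partial>P)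
         \<le> ennreal ((2 powr (\<gamma> - 3/2) / (\<gamma> - 3/2) + 2 powr (3/2) / (3/2) + 1) * b powr (- 3 / (2 * \<gamma>)))"
    (is "_ \<le> ennreal ?C")
proof -
  let ?\<phi> = "\<lambda>m j. min (\<bar>real j - real m\<bar> powr \<gamma> / b) 1"
  have "(\<integral>\<^sup>+j. ennreal (?\<phi> m j) * ennreal (bmc_kernel m j) \<partial>count_space UNIV) \<le> ennreal ?C" for m
  proof -
    have "(\<integral>\<^sup>+j. ennreal (?\<phi> m j) * ennreal (bmc_kernel m j) \<partial>count_space UNIV)
        = (\<Sum>j\<le>Suc m. ennreal (?\<phi> m j * bmc_kernel m j))"
      using b by (subst nn_integral_count_space'[of "{..Suc m}"])
        (auto simp: bmc_kernel_eq_0 bmc_kernel_nonneg ennreal_mult)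
    also have "\<dots> = ennreal (\<Sum>j\<le>Suc m. ?\<phi> m j * bmc_kernel m j)"
      using b by (intro sum_ennreal) (simp add: bmc_kernel_nonneg)
    also have "\<dots> \<le> ennreal ?C"
      using \<gamma> b by (intro ennreal_leI bmc_kernel_truncated_moment_le)
    finally show ?thesis .
  qed
  then show ?thesis
    by (rule bmc_nn_integral_step_le[OF bmc])
qed

section \<open>Almost sure summability\<close>

lemma AE_summable_of_summable_nn_integral:
  fixes Z :: "nat \<Rightarrow> 'a \<Rightarrow> real" and c :: "nat \<Rightarrow> real"
  assumes [measurable]: "\<And>t. Z t \<in> borel_measurable M"
    and Z_nonneg: "\<And>t \<omega>. 0 \<le> Z t \<omega>" and c_nonneg: "\<And>t. 0 \<le> c t"
    and Z_le: "\<And>t. (\<integral>\<^sup>+\<omega>. ennreal (Z t \<omega>) \<partial>M) \<le> ennreal (c t)" and "summable c"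
  shows "AE \<omega> in M. summable (\<lambda>t. Z t \<omega>)"
proof -
  have "(\<integral>\<^sup>+\<omega>. (\<Sum>t. ennreal (Z t \<omega>)) \<partial>M) = (\<Sum>t. \<integral>\<^sup>+\<omega>. ennreal (Z t \<omega>) \<partial>M)"
    by (rule nn_integral_suminf) simp
  also have "\<dots> \<le> (\<Sum>t. ennreal (c t))"
    using Z_le by (intro suminf_le) auto
  also have "\<dots> = ennreal (\<Sum>t. c t)"
    using c_nonneg \<open>summable c\<close> by (rule suminf_ennreal2)
  finally have "(\<integral>\<^sup>+\<omega>. (\<Sum>t. ennreal (Z t \<omega>)) \<partial>M) \<noteq> \<infinity>"
    by (auto simp: top_unique)
  then have "AE \<omega> in M. (\<Sum>t. ennreal (Z t \<omega>)) \<noteq> \<infinity>"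
    by (intro nn_integral_noteq_infinite) measurable
  then show ?thesis
    by eventually_elim (use Z_nonneg in \<open>auto intro: summable_suminf_not_top\<close>)
qed

lemma bmc_AE_summable_truncated:
  fixes b :: "nat \<Rightarrow> real"
  assumes bmc: "boundary_markov_chain P Mc m0" and \<gamma>: "3/2 < \<gamma>"
    and b: "\<And>t. 1 \<le> b t" and summable: "summable (\<lambda>t. b t powr (- 3 / (2 * \<gamma>)))"
  shows "AE \<omega> in P. summable (\<lambda>t. min (\<bar>real (Mc (Suc t) \<omega>) - real (Mc t \<omega>)\<bar> powr \<gamma> / b t) 1)"
proof -
  have [measurable]: "Mc n \<in> measurable P (count_space UNIV)" for n
    using bmc unfolding boundary_markov_chain_def by blast
  define C where "C = 2 powr (\<gamma> - 3/2) / (\<gamma> - 3/2) + 2 powr (3/2) / (3/2) + 1"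
  have b_nonneg: "0 \<le> b t" for t
    using b[of t] by simp
  have "0 < C"
    unfolding C_def using \<gamma> by (intro add_pos_pos divide_pos_pos) auto
  show ?thesis
  proof (rule AE_summable_of_summable_nn_integral[where c = "\<lambda>t. C * b t powr (- 3 / (2 * \<gamma>))"])
    show "(\<integral>\<^sup>+\<omega>. ennreal (min (\<bar>real (Mc (Suc t) \<omega>) - real (Mc t \<omega>)\<bar> powr \<gamma> / b t) 1) \<partial>P)
          \<le> ennreal (C * b t powr (- 3 / (2 * \<gamma>)))" for t
      unfolding C_def using bmc \<gamma> b by (rule bmc_truncated_moment_le)
  qed (use \<open>0 < C\<close> b_nonneg summable in \<open>auto intro: summable_mult\<close>)
qed

section \<open>Growth of the partial sums\<close>

lemma summable_of_summable_min_1: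
  fixes w :: "nat \<Rightarrow> real"
  assumes "\<And>t. 0 \<le> w t" and "summable (\<lambda>t. min (w t) 1)"
  shows "summable w"
proof -
  have "(\<lambda>t. min (w t) 1) \<longlonglongrightarrow> 0"
    using assms(2) by (rule summable_LIMSEQ_zero)
  then have "eventually (\<lambda>t. min (w t) 1 < 1) sequentially"
    by (rule order_tendstoD) simp
  then have "eventually (\<lambda>t. min (w t) 1 = w t) sequentially"
    by eventually_elim (simp add: min_def split: if_splits)
  from summable_cong[OF this] show ?thesis
    using assms(2) by simp
qed

lemma limsup_sum_div_finite_of_summable_truncated:
  fixes y b a :: "nat \<Rightarrow> real"
  assumes y_nonneg: "\<And>t. 0 \<le> y t" and b_pos: "\<And>t. 0 < b t" and "mono b"
    and summable: "summable (\<lambda>t. min (y t / b t) 1)"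
    and eventually_le: "eventually (\<lambda>T. b T \<le> K * a T \<and> 0 < a T) sequentially"
  shows "limsup (\<lambda>T. ereal ((\<Sum>t<T. y t) / a T)) < \<infinity>"
proof -
  define w where "w t = y t / b t" for t
  have w_nonneg: "0 \<le> w t" for t
    unfolding w_def using y_nonneg b_pos by (simp add: less_imp_le)
  have "summable w"
    using w_nonneg summable unfolding w_def by (rule summable_of_summable_min_1)
  define S where "S = suminf w"
  have "(\<Sum>t<T. y t) / a T \<le> K * S" if "b T \<le> K * a T" "0 < a T" for T
  proof -
    have "(\<Sum>t<T. y t) = (\<Sum>t<T. b t * w t)"
      using b_pos by (simp add: w_def less_imp_neq[symmetric])
    also have "\<dots> \<le> (\<Sum>t<T. b T * w t)"
      using \<open>mono b\<close> w_nonneg by (intro sum_mono mult_right_mono) (auto simp: mono_def)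
    also have "\<dots> \<le> b T * S"
      unfolding S_def sum_distrib_left[symmetric] using \<open>summable w\<close> w_nonneg b_pos
      by (intro mult_left_mono sum_le_suminf) (auto simp: less_imp_le)
    also have "\<dots> \<le> K * a T * S"
      using that \<open>summable w\<close> w_nonneg unfolding S_def by (intro mult_right_mono suminf_nonneg) auto
    finally show ?thesis
      using that by (simp add: divide_le_eq mult_ac)
  qed
  then have "limsup (\<lambda>T. ereal ((\<Sum>t<T. y t) / a T)) \<le> ereal (K * S)"
    using eventually_le by (intro Limsup_bounded) (auto elim: eventually_mono)
  then show ?thesis
    by (rule le_less_trans) simp
qed

lemma one_le_ln_add_3: "1 \<le> ln (real n + 3)"
proof -
  have "exp 1 \<le> real n + 3"
    using exp_le by linarith
  then show ?thesis
    by (simp add: ln_ge_iff)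
qed

lemma summable_bertrand:
  fixes e :: real
  assumes e: "1 < e"
  shows "summable (\<lambda>n. (real n + 3) powr (- 1) * ln (real n + 3) powr (- e))"
proof -
  define h where "h n = (real n + 3) powr (- 1) * ln (real n + 3) powr (- e)" for n :: nat
  have h_nonneg: "0 \<le> h n" for n
    unfolding h_def by simp
  have h_mono: "h (Suc n) \<le> h n" for n
    unfolding h_def using one_le_ln_add_3[of n] e
    by (intro mult_mono powr_mono2') auto
  have "summable (\<lambda>n. ln 2 powr (- e) * real n powr (- e))"
    using e by (intro summable_mult) (simp add: summable_real_powr_iff)
  then have "summable (\<lambda>n. 2 ^ n * h (2 ^ n))"
  proof (rule summable_comparison_test'[where N = 1])
    fix n :: nat assume n: "1 \<le> n"
    have "2 ^ n * h (2 ^ n) = 2 ^ n / (2 ^ n + 3) * ln (2 ^ n + 3) powr (- e)"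
      unfolding h_def by (simp add: powr_minus divide_inverse)
    also have "\<dots> \<le> 1 * ln (2 ^ n) powr (- e)"
    proof (intro mult_mono powr_mono2')
      show "ln (2 ^ n) \<le> ln (2 ^ n + 3 :: real)"
        by (subst ln_le_cancel_iff) (auto intro: add_pos_pos)
      show "0 < ln (2 ^ n :: real)"
        using n by simp
    qed (use e in \<open>auto simp: divide_le_eq add_nonneg_pos\<close>)
    also have "\<dots> = ln 2 powr (- e) * real n powr (- e)"
      by (simp add: ln_realpow powr_mult)
    finally show "norm (2 ^ n * h (2 ^ n)) \<le> ln 2 powr (- e) * real n powr (- e)"
      using h_nonneg by simp
  qed
  then show ?thesis
    using condensation_test[of h] h_mono h_nonneg unfolding h_def by blast
qed

text \<open>The shift by 3 keeps the logarithm at least 1, away from the junk values of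
  ln and powr at 0 and 1.\<close>

definition log_scale :: "real \<Rightarrow> real \<Rightarrow> nat \<Rightarrow> real" where
  "log_scale p q t = (real t + 3) powr p * ln (real t + 3) powr q"

lemma one_le_log_scale:
  assumes "0 \<le> p" "0 \<le> q"
  shows "1 \<le> log_scale p q t"
proof -
  have "1 \<le> (real t + 3) powr p" "1 \<le> ln (real t + 3) powr q"
    using assms one_le_ln_add_3[of t] by (auto intro: ge_one_powr_ge_zero)
  then have "1 * 1 \<le> log_scale p q t"
    unfolding log_scale_def by (intro mult_mono) auto
  then show ?thesis by simp
qed

lemma mono_log_scale: "0 \<le> p \<Longrightarrow> 0 \<le> q \<Longrightarrow> mono (log_scale p q)"
  unfolding log_scale_def mono_def using one_le_ln_add_3
  by (intro allI impI mult_mono powr_mono2) auto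

lemma eventually_log_scale_le:
  assumes "0 \<le> p" "0 \<le> q"
  shows "eventually (\<lambda>T. log_scale p q T \<le> 2 powr p * 2 powr q * (real T powr p * ln (real T) powr q)
                          \<and> 0 < real T powr p * ln (real T) powr q) sequentially"
  unfolding eventually_sequentially
proof (intro exI[of _ "3::nat"] allI impI conjI)
  fix T :: nat assume "3 \<le> T"
  then have T: "3 \<le> real T"
    by simp
  then show "0 < real T powr p * ln (real T) powr q"
    by simp
  have "real T + 3 \<le> real T * real T"
    using T mult_right_mono[of 3 "real T" "real T"] by linarith
  then have "ln (real T + 3) \<le> ln (real T * real T)"
    using T by simp
  also have "\<dots> = 2 * ln (real T)"
    using T by (simp add: ln_mult)
  finally have "ln (real T + 3) \<le> 2 * ln (real T)" .
  then have "ln (real T + 3) powr q \<le> (2 * ln (real T)) powr q"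
    using one_le_ln_add_3[of T] assms by (intro powr_mono2) auto
  moreover have "(real T + 3) powr p \<le> (2 * real T) powr p"
    using assms T by (intro powr_mono2) auto
  ultimately have "log_scale p q T \<le> (2 * real T) powr p * (2 * ln (real T)) powr q"
    unfolding log_scale_def by (intro mult_mono) auto
  then show "log_scale p q T \<le> 2 powr p * 2 powr q * (real T powr p * ln (real T) powr q)"
    using T by (simp add: powr_mult mult_ac)
qed

lemma summable_log_scale_powr:
  assumes "0 < p" "p < q"
  shows "summable (\<lambda>t. log_scale p q t powr (- 1 / p))"
proof -
  have "log_scale p q t powr (- 1 / p) = (real t + 3) powr (- 1) * ln (real t + 3) powr (- (q / p))" for t
    unfolding log_scale_def using assms by (simp add: powr_mult powr_powr)
  then show ?thesis
    using summable_bertrand[of "q / p"] assms by simp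
qed

theorem lemma5p1:
  fixes P :: "'a measure" and Mc :: "nat \<Rightarrow> 'a \<Rightarrow> nat" and m0 :: nat
    and \<gamma> \<epsilon> :: real
  assumes "boundary_markov_chain P Mc m0"
    and "\<gamma> > 3 / 2" and "\<epsilon> > 0"
  shows "AE \<omega> in P.
           limsup (\<lambda>T. ereal (bmc_V Mc \<gamma> T \<omega> /
              (real T powr (2 * \<gamma> / 3) * ln (real T) powr (2 * \<gamma> / 3 + \<epsilon>)))) < \<infinity>"
proof -
  define p q where "p = 2 * \<gamma> / 3" and "q = 2 * \<gamma> / 3 + \<epsilon>"
  have pq: "0 < p" "p < q" "- 3 / (2 * \<gamma>) = - 1 / p"
    using assms(2,3) by (auto simp: p_def q_def)
  have scale: "\<And>t. 1 \<le> log_scale p q t" "mono (log_scale p q)"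
    using pq by (simp_all add: one_le_log_scale mono_log_scale)
  have "AE \<omega> in P. summable (\<lambda>t. min (\<bar>real (Mc (Suc t) \<omega>) - real (Mc t \<omega>)\<bar> powr \<gamma> / log_scale p q t) 1)"
    using assms(1,2) scale(1) summable_log_scale_powr[OF pq(1,2)] pq(3)
    by (intro bmc_AE_summable_truncated) auto
  then show ?thesis
  proof (rule eventually_mono)
    fix \<omega> assume "summable (\<lambda>t. min (\<bar>real (Mc (Suc t) \<omega>) - real (Mc t \<omega>)\<bar> powr \<gamma> / log_scale p q t) 1)"
    then have "limsup (\<lambda>T. ereal ((\<Sum>t<T. \<bar>real (Mc (Suc t) \<omega>) - real (Mc t \<omega>)\<bar> powr \<gamma>)
                                  / (real T powr p * ln (real T) powr q))) < \<infinity>"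
      using eventually_log_scale_le[of p q] pq scale(2) less_le_trans[OF zero_less_one scale(1)]
      by (intro limsup_sum_div_finite_of_summable_truncated) auto
    then show "limsup (\<lambda>T. ereal (bmc_V Mc \<gamma> T \<omega> /
              (real T powr (2 * \<gamma> / 3) * ln (real T) powr (2 * \<gamma> / 3 + \<epsilon>)))) < \<infinity>"
      unfolding bmc_V_def p_def q_def .
  qed
qed

end
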